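(* Consider a run of \textsc{1-2-MinGreedy} on a finite simple undirected graph $G=(V,E)$ producing $M$, and a maximum matching $M^*$ such that each component of $(V,M\cup M^* )$ with an edge is an edge of $M\cap M^*$ or an $M$-$M^*$-path. Let $X$ be an $M$-$M^*$-path created in the step in which $u$ is matched with $v$, and assume that a degree-1 endpoint exists after creation of $X$. Then the node $u'$ selected by the algorithm in the next step is either (a) an $M^*$-neighbor of $u$ or $v$ in $X$, or (b) a neighbor of $u$ or $v$ via an edge of $F$ that belongs to a component $Y\neq X$ of $(V,M\cup M^* )$.
   Context: \textsc{1-2-MinGreedy}: starting with $M=\emptyset$ and until no edges remain in the current graph, if every node has current degree at least $3$ select an arbitrary edge $\{u,v\}$ (call $u$ the selected node), otherwise select an arbitrary node $u$ of minimum non-zero current degree and an arbitrary neighbor $v$; add $\{u,v\}$ to $M$ and remove all edges incident with $u$ or $v$. An $M$-$M^*$-path is a component of $(V,M\cup M^* )$ that is an alternating path starting and ending with an $M^*$-edge, with $m\geq1$ edges of $M$ and $m+1$ edges of $M^*$; its endpoints are its two $M$-uncovered end nodes. The creation step of $X$ is the step in which the first $M$-edge of $X$ is picked. $F=E\setminus(M\cup M^* )$. For an endpoint $w$, an edge $\{v,w\}\in F$ is a transfer from $v$ to $w$ if, in the step in which $v$ is matched, the current degree of $w$ drops to at most $1$; such a transfer is canceled if at the moment $w$ has current degree $1$ with the single remaining edge $\{v,w\}\in F$, $w$ is already the target of two transfers from nodes matched earlier. A debit is a non-canceled transfer. A degree-1 endpoint exists after creation of $X$ if $u$ or $v$ pays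 a debit to some endpoint $w$ and $w$ has current degree exactly $1$ immediately after the creation step. *)

theory Defs
  imports Main
begin

definition simple_graph :: "'a set \<Rightarrow> 'a set set \<Rightarrow> bool" where
  "simple_graph V E \<longleftrightarrow> finite V \<and> (\<forall>e\<in>E. \<exists>a b. e = {a, b} \<and> a \<noteq> b \<and> a \<in> V \<and> b \<in> V)"

definition is_matching :: "'a set set \<Rightarrow> 'a set set \<Rightarrow> bool" where
  "is_matching E M \<longleftrightarrow> M \<subseteq> E \<and> (\<forall>e1\<in>M. \<forall>e2\<in>M. e1 \<noteq> e2 \<longrightarrow> e1 \<inter> e2 = {})"

definition is_max_matching :: "'a set set \<Rightarrow> 'a set set \<Rightarrow> bool" where
  "is_max_matching E M \<longleftrightarrow> is_matching E M \<and>
     (\<forall>M'. is_matching E M' \<longrightarrow> card M' \<le> card M)"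

(* A run is a list of steps (u, v): in step i the selected node u is matched with v.
   cur_edges E run i = edges remaining after the first i steps. *)
definition cur_edges :: "'a set set \<Rightarrow> ('a \<times> 'a) list \<Rightarrow> nat \<Rightarrow> 'a set set" where
  "cur_edges E run i = {e \<in> E. \<forall>j<i. fst (run ! j) \<notin> e \<and> snd (run ! j) \<notin> e}"

definition cur_deg :: "'a set set \<Rightarrow> ('a \<times> 'a) list \<Rightarrow> nat \<Rightarrow> 'a \<Rightarrow> nat" where
  "cur_deg E run i x = card {e \<in> cur_edges E run i. x \<in> e}"

definition legal_step :: "'a set set \<Rightarrow> ('a \<times> 'a) list \<Rightarrow> nat \<Rightarrow> bool" where
  "legal_step E run i \<longleftrightarrow>
     (let u = fst (run ! i); v = snd (run ! i); d = cur_deg E run i in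
       {u, v} \<in> cur_edges E run i \<and>
       (if (\<forall>x. d x \<noteq> 0 \<longrightarrow> 3 \<le> d x) then True
        else (\<forall>x. d x \<noteq> 0 \<longrightarrow> d u \<le> d x)))"

definition min_greedy_run :: "'a set set \<Rightarrow> ('a \<times> 'a) list \<Rightarrow> bool" where
  "min_greedy_run E run \<longleftrightarrow>
     (\<forall>i<length run. legal_step E run i) \<and> cur_edges E run (length run) = {}"

definition run_matching :: "('a \<times> 'a) list \<Rightarrow> 'a set set" where
  "run_matching run = {{fst s, snd s} | s. s \<in> set run}"

definition comp :: "'a set set \<Rightarrow> 'a set set \<Rightarrow> 'a \<Rightarrow> 'a set" where
  "comp M Ms x = {y. (x, y) \<in> {(a, b). {a, b} \<in> M \<union> Ms}\<^sup>*}"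

definition is_MMpath :: "'a set set \<Rightarrow> 'a set set \<Rightarrow> 'a list \<Rightarrow> bool" where
  "is_MMpath M Ms xs \<longleftrightarrow>
     (\<exists>m. m \<ge> 1 \<and> length xs = 2 * m + 2) \<and> distinct xs \<and>
     (\<forall>i. Suc i < length xs \<longrightarrow>
        (if even i then {xs ! i, xs ! Suc i} \<in> Ms - M
                   else {xs ! i, xs ! Suc i} \<in> M - Ms)) \<and>
     (\<forall>e\<in>M. hd xs \<notin> e \<and> last xs \<notin> e) \<and>
     comp M Ms (hd xs) = set xs"

definition MMpath_Medges :: "'a list \<Rightarrow> 'a set set" where
  "MMpath_Medges xs = {{xs ! i, xs ! Suc i} | i. Suc i < length xs \<and> odd i}"

definition is_endpoint :: "'a set set \<Rightarrow> 'a set set \<Rightarrow> 'a \<Rightarrow> bool" where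
  "is_endpoint M Ms w \<longleftrightarrow> (\<exists>xs. is_MMpath M Ms xs \<and> (w = hd xs \<or> w = last xs))"

definition transfer_at :: "'a set set \<Rightarrow> 'a set set \<Rightarrow> ('a \<times> 'a) list \<Rightarrow> nat \<Rightarrow> 'a \<Rightarrow> 'a \<Rightarrow> bool" where
  "transfer_at E Ms run j v w \<longleftrightarrow>
     (let M = run_matching run in
       j < length run \<and> (v = fst (run ! j) \<or> v = snd (run ! j)) \<and>
       is_endpoint M Ms w \<and> {v, w} \<in> E - (M \<union> Ms) \<and>
       cur_deg E run (Suc j) w \<le> 1 \<and> cur_deg E run (Suc j) w < cur_deg E run j w)"

definition canceled_at :: "'a set set \<Rightarrow> 'a set set \<Rightarrow> ('a \<times> 'a) list \<Rightarrow> nat \<Rightarrow> 'a \<Rightarrow> 'a \<Rightarrow> bool" where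
  "canceled_at E Ms run j v w \<longleftrightarrow>
     transfer_at E Ms run j v w \<and>
     {e \<in> cur_edges E run j. w \<in> e} = {{v, w}} \<and>
     2 \<le> card {v'. \<exists>j'<j. transfer_at E Ms run j' v' w}"

definition debit_at :: "'a set set \<Rightarrow> 'a set set \<Rightarrow> ('a \<times> 'a) list \<Rightarrow> nat \<Rightarrow> 'a \<Rightarrow> 'a \<Rightarrow> bool" where
  "debit_at E Ms run j v w \<longleftrightarrow> transfer_at E Ms run j v w \<and> \<not> canceled_at E Ms run j v w"

end

theory Submission
  imports Defs
begin

text \<open>
  The nodes of an \<open>M\<close>-\<open>M\<^sup>*\<close>-path are untouched before its creation step \<open>k\<close>, so the
  selected node \<open>u\<close> still has its \<open>M\<^sup>*\<close>-edge besides \<open>{u, v}\<close> and has degree at least 2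
  in step \<open>k\<close>. A degree-1 node after step \<open>k\<close> forces the next selected node \<open>u'\<close> to have
  degree 1; had \<open>u'\<close> not lost an edge to \<open>u\<close> or \<open>v\<close>, it would have had degree 1 already in
  step \<open>k\<close>, contradicting the choice of \<open>u\<close>. If \<open>u'\<close> lies on the path, its \<open>M\<^sup>*\<close>-edge
  must have been removed in step \<open>k\<close>, since otherwise it would be the unique remaining edge
  of \<open>u'\<close> and hence the \<open>M\<close>-edge picked next. Otherwise the lost edge leaves the path's
  component, so it is neither in \<open>M\<^sup>*\<close> nor, as \<open>u\<close> and \<open>v\<close> are already matched, in \<open>M\<close>.
\<close>

definition run_edge :: "('a \<times> 'a) list \<Rightarrow> nat \<Rightarrow> 'a set" where
  "run_edge run j = {fst (run ! j), snd (run ! j)}"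

lemma simple_graph_finite_edges:
  assumes "simple_graph V E"
  shows "finite E"
proof -
  have "E \<subseteq> Pow V"
    using assms unfolding simple_graph_def by fastforce
  then show ?thesis
    using assms unfolding simple_graph_def by (meson finite_Pow_iff finite_subset)
qed

lemma simple_graph_edge_eq:
  assumes "simple_graph V E" "f \<in> E" "x \<in> f" "y \<in> f" "x \<noteq> y"
  shows "f = {x, y}"
  using assms unfolding simple_graph_def by fastforce

lemma cur_edges_subset: "cur_edges E run i \<subseteq> E"
  unfolding cur_edges_def by blast

lemma cur_edges_Suc:
  "cur_edges E run (Suc i) = {f \<in> cur_edges E run i. f \<inter> run_edge run i = {}}"
  unfolding cur_edges_def run_edge_def by (auto simp: less_Suc_eq)

lemma finite_cur_incident_edges: "finite E \<Longrightarrow> finite {f \<in> cur_edges E run i. x \<in> f}"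
  by (erule finite_subset[rotated]) (auto simp: cur_edges_def)

lemma cur_deg_pos:
  assumes "finite E" "f \<in> cur_edges E run i" "x \<in> f"
  shows "cur_deg E run i x \<noteq> 0"
  using assms(2,3) finite_cur_incident_edges[OF assms(1)] unfolding cur_deg_def
  by (metis (mono_tags, lifting) card_0_eq empty_iff mem_Collect_eq)

lemma cur_deg_ge_two:
  assumes "finite E" "f \<in> cur_edges E run i" "g \<in> cur_edges E run i" "f \<noteq> g" "x \<in> f" "x \<in> g"
  shows "2 \<le> cur_deg E run i x"
proof -
  have "finite {h \<in> cur_edges E run i. x \<in> h}"
    using assms(1) by (rule finite_cur_incident_edges)
  moreover have "{f, g} \<subseteq> {h \<in> cur_edges E run i. x \<in> h}"
    using assms by blast
  ultimately have "card {f, g} \<le> cur_deg E run i x"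
    unfolding cur_deg_def by (rule card_mono)
  with assms(4) show ?thesis
    by simp
qed

lemma cur_deg_one_unique_edge:
  assumes "cur_deg E run i x = 1" "f \<in> cur_edges E run i" "g \<in> cur_edges E run i" "x \<in> f" "x \<in> g"
  shows "f = g"
proof -
  obtain h where "{e \<in> cur_edges E run i. x \<in> e} = {h}"
    using assms(1) unfolding cur_deg_def by (rule card_1_singletonE)
  then show ?thesis
    using assms(2-) by (metis (mono_tags, lifting) mem_Collect_eq singletonD)
qed

lemma legal_step_run_edge:
  assumes "legal_step E run i"
  shows "run_edge run i \<in> cur_edges E run i"
  using assms unfolding legal_step_def Let_def run_edge_def by (rule conjunct1)

text \<open>A node of degree 1 rules out the branch in which every degree is at least 3.\<close>

lemma legal_step_selected_degree_one:
  assumes "finite E" "legal_step E run i" "cur_deg E run i y = 1"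
  shows "cur_deg E run i (fst (run ! i)) = 1"
proof -
  let ?d = "cur_deg E run i"
  have "\<not> (\<forall>x. ?d x \<noteq> 0 \<longrightarrow> 3 \<le> ?d x)"
    using assms(3) by (metis one_neq_zero numeral_le_one_iff semiring_norm(70))
  then have "\<forall>x. ?d x \<noteq> 0 \<longrightarrow> ?d (fst (run ! i)) \<le> ?d x"
    using assms(2) unfolding legal_step_def Let_def by (simp split: if_splits)
  then have "?d (fst (run ! i)) \<le> ?d y"
    using assms(3) by (metis zero_neq_one)
  moreover have "?d (fst (run ! i)) \<noteq> 0"
    using cur_deg_pos[OF assms(1) legal_step_run_edge[OF assms(2)]] by (simp add: run_edge_def)
  ultimately show ?thesis
    using assms(3) by simp
qed

lemma degree_one_after_step_lost_edge:
  assumes "finite E" "legal_step E run k" "2 \<le> cur_deg E run k (fst (run ! k))"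
    and "cur_deg E run (Suc k) y = 1"
  shows "\<exists>f\<in>cur_edges E run k. y \<in> f \<and> f \<inter> run_edge run k \<noteq> {}"
proof (rule ccontr)
  assume "\<not> ?thesis"
  then have "{f \<in> cur_edges E run (Suc k). y \<in> f} = {f \<in> cur_edges E run k. y \<in> f}"
    by (auto simp: cur_edges_Suc)
  then have "cur_deg E run k y = 1"
    using assms(4) by (simp add: cur_deg_def)
  then have "cur_deg E run k (fst (run ! k)) = 1"
    by (rule legal_step_selected_degree_one[OF assms(1,2)])
  with assms(3) show False
    by simp
qed

lemma min_greedy_run_legal: "min_greedy_run E run \<Longrightarrow> i < length run \<Longrightarrow> legal_step E run i"
  unfolding min_greedy_run_def by blast

lemma min_greedy_run_later_edge_avoids:
  assumes "min_greedy_run E run" "j < j'" "j' < length run"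
  shows "run_edge run j \<inter> run_edge run j' = {}"
  using legal_step_run_edge[OF min_greedy_run_legal[OF assms(1,3)]] assms(2)
  unfolding cur_edges_def run_edge_def by blast

lemma min_greedy_run_edges_disjoint:
  assumes "min_greedy_run E run" "j < length run" "j' < length run"
    and "y \<in> run_edge run j" "y \<in> run_edge run j'"
  shows "j = j'"
  using min_greedy_run_later_edge_avoids[OF assms(1), of j j'] min_greedy_run_later_edge_avoids[OF assms(1), of j' j] assms
  by (metis disjoint_iff nat_neq_iff)

lemma run_matching_eq: "run_matching run = run_edge run ` {..<length run}"
  unfolding run_matching_def run_edge_def by (force simp: in_set_conv_nth)

lemma run_matching_edge_through_step:
  assumes "min_greedy_run E run" "k < length run" "x \<in> run_edge run k"
    and "f \<in> run_matching run" "x \<in> f"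
  shows "f = run_edge run k"
proof -
  obtain j where "j < length run" "f = run_edge run j"
    using assms(4) by (auto simp: run_matching_eq)
  with assms show ?thesis
    using min_greedy_run_edges_disjoint[OF assms(1)] by blast
qed

lemma MMpath_edge:
  assumes "is_MMpath M Ms xs" "Suc i < length xs"
  shows "if even i then {xs ! i, xs ! Suc i} \<in> Ms - M else {xs ! i, xs ! Suc i} \<in> M - Ms"
  using assms unfolding is_MMpath_def by (elim conjE allE impE)

lemma MMpath_ends_uncovered:
  assumes "is_MMpath M Ms xs" "f \<in> M"
  shows "hd xs \<notin> f" "last xs \<notin> f"
  using assms unfolding is_MMpath_def by simp_all

lemma MMpath_covered_node_interior:
  assumes "is_MMpath M Ms xs" "y \<in> set xs" "\<exists>f\<in>M. y \<in> f"
  obtains i where "0 < i" "Suc i < length xs" "xs ! i = y"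
proof -
  obtain i where i: "i < length xs" "xs ! i = y"
    using assms(2) by (metis in_set_conv_nth)
  have "hd xs \<noteq> y" "last xs \<noteq> y"
    using assms(3) MMpath_ends_uncovered[OF assms(1)] by blast+
  moreover have "xs \<noteq> []"
    using i(1) by auto
  ultimately have "i \<noteq> 0" "i \<noteq> length xs - 1"
    using i by (metis hd_conv_nth, metis last_conv_nth)
  with i that show ?thesis
    by simp
qed

lemma MMpath_Ms_partner:
  assumes "is_MMpath M Ms xs" "y \<in> set xs" "\<exists>f\<in>M. y \<in> f"
  obtains z where "z \<in> set xs" "{y, z} \<in> Ms - M"
proof -
  obtain i where i: "0 < i" "Suc i < length xs" "xs ! i = y"
    using assms by (rule MMpath_covered_node_interior)
  show ?thesis
  proof (cases "even i")
    case True
    then show ?thesis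
      using MMpath_edge[OF assms(1) i(2)] i that[of "xs ! Suc i"] by simp
  next
    case False
    then have "even (i - 1)" "Suc (i - 1) = i"
      using i(1) by auto
    then show ?thesis
      using MMpath_edge[OF assms(1), of "i - 1"] i that[of "xs ! (i - 1)"]
      by (simp add: insert_commute)
  qed
qed

lemma MMpath_MedgesI: "Suc i < length xs \<Longrightarrow> odd i \<Longrightarrow> {xs ! i, xs ! Suc i} \<in> MMpath_Medges xs"
  unfolding MMpath_Medges_def by blast

lemma MMpath_Medge_through:
  assumes "is_MMpath M Ms xs" "y \<in> set xs" "\<exists>f\<in>M. y \<in> f"
  obtains f where "f \<in> MMpath_Medges xs" "y \<in> f"
proof -
  obtain i where i: "0 < i" "Suc i < length xs" "xs ! i = y"
    using assms by (rule MMpath_covered_node_interior)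
  show ?thesis
  proof (cases "odd i")
    case True
    then show ?thesis
      using that[OF MMpath_MedgesI[OF i(2)]] i(3) by simp
  next
    case False
    then have "odd (i - 1)" "Suc (i - 1) = i"
      using i(1) by auto
    then show ?thesis
      using that[OF MMpath_MedgesI[of "i - 1"]] i by simp
  qed
qed

lemma MMpath_Medges_subset:
  assumes "is_MMpath M Ms xs"
  shows "MMpath_Medges xs \<subseteq> M"
proof
  fix f
  assume "f \<in> MMpath_Medges xs"
  then obtain i where "f = {xs ! i, xs ! Suc i}" "Suc i < length xs" "odd i"
    unfolding MMpath_Medges_def by blast
  then show "f \<in> M"
    using MMpath_edge[OF assms] by fastforce
qed

lemma MMpath_Medges_nodes: "f \<in> MMpath_Medges xs \<Longrightarrow> f \<subseteq> set xs"
  unfolding MMpath_Medges_def by auto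

lemma MMpath_comp_closed:
  assumes "is_MMpath M Ms xs" "x \<in> set xs" "{x, y} \<in> M \<union> Ms"
  shows "y \<in> set xs"
proof -
  have "comp M Ms (hd xs) = set xs"
    using assms(1) unfolding is_MMpath_def by blast
  moreover have "(x, y) \<in> {(a, b). {a, b} \<in> M \<union> Ms}"
    using assms(3) by simp
  ultimately show ?thesis
    using assms(2) unfolding comp_def by (blast intro: rtrancl_into_rtrancl)
qed

locale MMpath_creation =
  fixes V :: "'a set" and E Ms :: "'a set set" and run :: "('a \<times> 'a) list"
    and xs :: "'a list" and k :: nat
  assumes graph: "simple_graph V E"
    and run: "min_greedy_run E run"
    and Ms_subset: "Ms \<subseteq> E"
    and path: "is_MMpath (run_matching run) Ms xs"
    and k_less: "k < length run"
    and creation: "run_edge run k \<in> MMpath_Medges xs"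
    and first: "\<forall>j<k. run_edge run j \<notin> MMpath_Medges xs"
begin

lemma finite_edges: "finite E"
  using graph by (rule simple_graph_finite_edges)

lemma nodes_untouched_before_creation:
  assumes y: "y \<in> set xs" and j: "j < k"
  shows "y \<notin> run_edge run j"
proof
  assume y_j: "y \<in> run_edge run j"
  have j_less: "j < length run"
    using j k_less by simp
  then have "\<exists>f\<in>run_matching run. y \<in> f"
    using y_j by (auto simp: run_matching_eq)
  then obtain f where f: "f \<in> MMpath_Medges xs" "y \<in> f"
    by (rule MMpath_Medge_through[OF path y])
  then obtain j' where "j' < length run" "f = run_edge run j'"
    using MMpath_Medges_subset[OF path] by (auto simp: run_matching_eq)
  with j_less y_j f have "run_edge run j \<in> MMpath_Medges xs"
    using min_greedy_run_edges_disjoint[OF run] by blast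
  with first j show False
    by blast
qed

lemma path_edges_current_at_creation:
  assumes "f \<in> E" "f \<subseteq> set xs"
  shows "f \<in> cur_edges E run k"
  using assms nodes_untouched_before_creation unfolding cur_edges_def run_edge_def by blast

lemma creation_edge_nodes: "run_edge run k \<subseteq> set xs"
  using creation by (rule MMpath_Medges_nodes)

lemma creation_edge_in_matching: "run_edge run k \<in> run_matching run"
  using k_less by (auto simp: run_matching_eq)

lemma selected_degree_at_creation: "2 \<le> cur_deg E run k (fst (run ! k))"
proof -
  let ?u = "fst (run ! k)"
  have u: "?u \<in> set xs" "\<exists>f\<in>run_matching run. ?u \<in> f"
    using creation_edge_nodes creation_edge_in_matching by (auto simp: run_edge_def)
  obtain z where z: "z \<in> set xs" "{?u, z} \<in> Ms - run_matching run"
    using path u by (rule MMpath_Ms_partner)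
  then have "{?u, z} \<in> cur_edges E run k"
    using Ms_subset u(1) by (intro path_edges_current_at_creation) auto
  moreover have "{?u, z} \<noteq> run_edge run k"
    using z creation_edge_in_matching by auto
  ultimately show ?thesis
    using finite_edges legal_step_run_edge[OF min_greedy_run_legal[OF run k_less]]
    by (intro cur_deg_ge_two) (auto simp: run_edge_def)
qed

lemma next_step_exists:
  assumes "cur_deg E run (Suc k) w = 1"
  shows "Suc k < length run"
proof (rule ccontr)
  assume "\<not> ?thesis"
  then have "cur_edges E run (Suc k) = {}"
    using run k_less unfolding min_greedy_run_def by (metis Suc_lessI)
  with assms show False
    by (simp add: cur_deg_def)
qed

context
  fixes u' :: 'a
  assumes next_step: "Suc k < length run"
    and u'_def: "u' = fst (run ! Suc k)"
    and u'_degree: "cur_deg E run (Suc k) u' = 1"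
begin

lemma next_edge_current: "run_edge run (Suc k) \<in> cur_edges E run (Suc k)"
  using run next_step by (intro legal_step_run_edge min_greedy_run_legal)

lemma next_selected_not_in_creation_edge: "u' \<notin> run_edge run k"
  using next_edge_current by (auto simp: cur_edges_Suc run_edge_def u'_def)

lemma next_selected_lost_edge:
  obtains x where "x \<in> run_edge run k" "{x, u'} \<in> cur_edges E run k"
proof -
  obtain f x where f: "f \<in> cur_edges E run k" "u' \<in> f" "x \<in> f" "x \<in> run_edge run k"
    using degree_one_after_step_lost_edge[OF finite_edges min_greedy_run_legal[OF run k_less]
        selected_degree_at_creation u'_degree] by blast
  moreover have "f = {x, u'}"
    using f next_selected_not_in_creation_edge cur_edges_subset
    by (intro simple_graph_edge_eq[OF graph]) auto
  ultimately show ?thesis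
    using that by blast
qed

text \<open>An \<open>M\<^sup>*\<close>-edge of \<open>u'\<close> surviving step \<open>k\<close> would be its only edge, hence picked into \<open>M\<close>.\<close>

lemma next_selected_on_path:
  assumes "u' \<in> set xs"
  shows "\<exists>x\<in>run_edge run k. {x, u'} \<in> Ms"
proof -
  have "\<exists>f\<in>run_matching run. u' \<in> f"
    using next_step by (auto simp: run_matching_eq u'_def run_edge_def)
  then obtain z where z: "z \<in> set xs" "{u', z} \<in> Ms - run_matching run"
    by (rule MMpath_Ms_partner[OF path assms])
  have "z \<in> run_edge run k"
  proof (rule ccontr)
    assume "z \<notin> run_edge run k"
    then have "{u', z} \<in> cur_edges E run (Suc k)"
      using z assms Ms_subset path_edges_current_at_creation next_selected_not_in_creation_edge
      by (auto simp: cur_edges_Suc)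
    then have "{u', z} = run_edge run (Suc k)"
      by (rule cur_deg_one_unique_edge[OF u'_degree _ next_edge_current])
        (auto simp: run_edge_def u'_def)
    with z next_step show False
      by (auto simp: run_matching_eq)
  qed
  with z show ?thesis
    by (auto simp: insert_commute)
qed

lemma next_selected_off_path:
  assumes "u' \<notin> set xs" "x \<in> run_edge run k" "{x, u'} \<in> cur_edges E run k"
  shows "{x, u'} \<in> E - (run_matching run \<union> Ms)" "comp (run_matching run) Ms u' \<noteq> set xs"
proof -
  have "{x, u'} \<notin> Ms"
    using assms creation_edge_nodes MMpath_comp_closed[OF path] by blast
  moreover have "{x, u'} \<notin> run_matching run"
    using assms(2) next_selected_not_in_creation_edge run_matching_edge_through_step[OF run k_less]
    by blast
  ultimately show "{x, u'} \<in> E - (run_matching run \<union> Ms)"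
    using assms(3) cur_edges_subset by blast
  show "comp (run_matching run) Ms u' \<noteq> set xs"
    using assms(1) unfolding comp_def by blast
qed

lemma next_selected_neighbour:
  "(\<exists>x\<in>run_edge run k. {x, u'} \<in> Ms \<and> u' \<in> set xs) \<or>
   (\<exists>x\<in>run_edge run k. {x, u'} \<in> E - (run_matching run \<union> Ms) \<and>
      comp (run_matching run) Ms u' \<noteq> set xs)"
proof (cases "u' \<in> set xs")
  case True
  then show ?thesis
    using next_selected_on_path by blast
next
  case False
  obtain x where "x \<in> run_edge run k" "{x, u'} \<in> cur_edges E run k"
    by (rule next_selected_lost_edge)
  with False show ?thesis
    using next_selected_off_path by blast
qed

end

end

theorem lemma11:
  fixes V :: "'a set" and E Ms :: "'a set set" and run :: "('a \<times> 'a) list"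
    and xs :: "'a list" and k :: nat
  assumes G: "simple_graph V E"
    and R: "min_greedy_run E run"
    and Mstar: "is_max_matching E Ms"
    and comps: "\<forall>x\<in>V. (\<exists>e\<in>run_matching run \<union> Ms. x \<in> e) \<longrightarrow>
                  (\<exists>e\<in>run_matching run \<inter> Ms. comp (run_matching run) Ms x = e)
                  \<or> (\<exists>ys. is_MMpath (run_matching run) Ms ys \<and> x \<in> set ys)"
    and X: "is_MMpath (run_matching run) Ms xs"
    and k: "k < length run"
    and creation: "{fst (run ! k), snd (run ! k)} \<in> MMpath_Medges xs"
    and first: "\<forall>j<k. {fst (run ! j), snd (run ! j)} \<notin> MMpath_Medges xs"
    and deg1: "\<exists>w. (debit_at E Ms run k (fst (run ! k)) w \<or> debit_at E Ms run k (snd (run ! k)) w)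
                  \<and> cur_deg E run (Suc k) w = 1"
  shows "Suc k < length run \<and>
    (let u = fst (run ! k); v = snd (run ! k); u' = fst (run ! Suc k);
         M = run_matching run in
      (\<exists>x\<in>{u, v}. {x, u'} \<in> Ms \<and> u' \<in> set xs) \<or>
      (\<exists>x\<in>{u, v}. {x, u'} \<in> E - (M \<union> Ms) \<and> comp M Ms u' \<noteq> set xs))"
proof -
  interpret MMpath_creation V E Ms run xs k
    using G R Mstar X k creation first
    by unfold_locales (auto simp: run_edge_def is_max_matching_def is_matching_def)
  obtain w where "cur_deg E run (Suc k) w = 1"
    using deg1 by blast
  then have next_step: "Suc k < length run"
    by (rule next_step_exists)
  moreover have "cur_deg E run (Suc k) (fst (run ! Suc k)) = 1"
    using finite_edges min_greedy_run_legal[OF R next_step] \<open>cur_deg E run (Suc k) w = 1\<close>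
    by (rule legal_step_selected_degree_one)
  ultimately show ?thesis
    using next_selected_neighbour[OF next_step refl] by (simp add: run_edge_def)
qed

end
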